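(* If $\sum_{i=1}^M b_i<1$, then for every $\epsilon>0$ the energy-scarce solution $\mathbf r^\star$ is feasible for Problem 1, i.e. $r^\star_l>0$ and $\sigma_l(\mathbf r^\star)\le b_l$ for all $l$.
   Context: Fix an integer $M\ge1$, weights $w_1,\dots,w_M>0$, constants $b_1,\dots,b_M>0$, and $\epsilon>0$. For $\mathbf r\in(0,\infty)^M$ write $S(\mathbf r)=\sum_{i=1}^M r_i$ and define $$\sigma_l(\mathbf r)=\frac{(1-e^{-r_l\epsilon})S(\mathbf r)+r_le^{-r_l\epsilon}}{S(\mathbf r)+1}.$$ Problem 1's constraint set is $\{\mathbf r\in(0,\infty)^M:\sigma_l(\mathbf r)\le b_l\ \forall l\}$. Energy-scarce solution (when $B:=\sum_i b_i<1$): for each $l$ let $$c_l=\frac{2b_l(1-B)^2}{b_l(1-B)^2+\sqrt{b_l^2(1-B)^4+4b_l^2(1-B)^2(B-b_l)\epsilon}},$$ let $x^\star=\frac{\min_l c_l}{1-B}$, $\beta^\star=\sum_{i=1}^M \frac{1}{\sqrt{w_i}}$, and set $r^\star_l=\min\{b_l,\beta^\star\sqrt{w_l}\}\,x^\star$. *)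

theory Defs
  imports Complex_Main
begin

text \<open>Vectors in (0,inf)^M are represented as functions nat => real indexed by {1..M}.\<close>

definition S_sum :: "nat \<Rightarrow> (nat \<Rightarrow> real) \<Rightarrow> real" where
  "S_sum M r = (\<Sum>i=1..M. r i)"

definition sigma :: "nat \<Rightarrow> real \<Rightarrow> (nat \<Rightarrow> real) \<Rightarrow> nat \<Rightarrow> real" where
  "sigma M \<epsilon> r l =
     ((1 - exp (- r l * \<epsilon>)) * S_sum M r + r l * exp (- r l * \<epsilon>)) / (S_sum M r + 1)"

definition Bsum :: "nat \<Rightarrow> (nat \<Rightarrow> real) \<Rightarrow> real" where
  "Bsum M b = (\<Sum>i=1..M. b i)"

definition c_coef :: "nat \<Rightarrow> (nat \<Rightarrow> real) \<Rightarrow> real \<Rightarrow> nat \<Rightarrow> real" where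
  "c_coef M b \<epsilon> l =
     (let B = Bsum M b in
      2 * b l * (1 - B)^2 /
        (b l * (1 - B)^2 + sqrt ((b l)^2 * (1 - B)^4 + 4 * (b l)^2 * (1 - B)^2 * (B - b l) * \<epsilon>)))"

definition x_star :: "nat \<Rightarrow> (nat \<Rightarrow> real) \<Rightarrow> real \<Rightarrow> real" where
  "x_star M b \<epsilon> = Min (c_coef M b \<epsilon> ` {1..M}) / (1 - Bsum M b)"

definition beta_star :: "nat \<Rightarrow> (nat \<Rightarrow> real) \<Rightarrow> real" where
  "beta_star M w = (\<Sum>i=1..M. 1 / sqrt (w i))"

definition r_star :: "nat \<Rightarrow> (nat \<Rightarrow> real) \<Rightarrow> (nat \<Rightarrow> real) \<Rightarrow> real \<Rightarrow> nat \<Rightarrow> real" where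
  "r_star M w b \<epsilon> l = min (b l) (beta_star M w * sqrt (w l)) * x_star M b \<epsilon>"

end

theory Submission
  imports Defs
begin

text \<open>Since \<open>\<beta>\<^sup>\<star> \<surd>w\<^sub>l \<ge> 1 > b\<^sub>l\<close>, the solution is proportional, \<open>r\<^sup>\<star>\<^sub>l = b\<^sub>l x\<^sup>\<star>\<close>, so
  \<open>S(r\<^sup>\<star>) = B x\<^sup>\<star>\<close>. Bounding \<open>e\<^sup>-\<^sup>t \<ge> 1 - t\<close> in the numerator of \<open>\<sigma>\<^sub>l\<close> reduces
  \<open>\<sigma>\<^sub>l \<le> b\<^sub>l\<close> to the quadratic inequality \<open>(B - b\<^sub>l) \<epsilon> x\<^sup>2 + (1 - B) x \<le> 1\<close>, and
  \<open>c\<^sub>l / (1 - B)\<close> is exactly the positive root of that quadratic; taking the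
  minimum over \<open>l\<close> places \<open>x\<^sup>\<star>\<close> below every one of these roots.\<close>

definition quad_root :: "real \<Rightarrow> real \<Rightarrow> real" where
  "quad_root a q = 2 / (a + sqrt (a\<^sup>2 + 4 * q))"

lemma quad_root_pos:
  assumes "a > 0" "q \<ge> 0"
  shows "quad_root a q > 0"
  using assms by (simp add: quad_root_def add_pos_nonneg)

lemma quad_root_eq:
  assumes "a > 0" "q \<ge> 0"
  shows "q * (quad_root a q)\<^sup>2 + a * quad_root a q = 1"
proof -
  define s where "s = sqrt (a\<^sup>2 + 4 * q)"
  have s: "s \<ge> 0" "s\<^sup>2 = a\<^sup>2 + 4 * q" unfolding s_def using assms by simp_all
  have "a + s > 0" using assms s by simp
  have "q * (2 / t)\<^sup>2 + a * (2 / t) = (4 * q + 2 * a * t) / t\<^sup>2" if "t \<noteq> 0" for t :: real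
    using that by (simp add: field_simps power2_eq_square)
  then have "q * (2 / (a + s))\<^sup>2 + a * (2 / (a + s)) = (4 * q + 2 * a * (a + s)) / (a + s)\<^sup>2"
    using \<open>a + s > 0\<close> by simp
  also have "4 * q + 2 * a * (a + s) = (a + s)\<^sup>2"
    using s by (simp add: power2_eq_square algebra_simps)
  finally show ?thesis using \<open>a + s > 0\<close> by (simp add: quad_root_def s_def)
qed

lemma quadratic_le_one_below_root:
  assumes "a > 0" "q \<ge> 0" "0 \<le> x" "x \<le> quad_root a q"
  shows "q * x\<^sup>2 + a * x \<le> 1"
proof -
  have "q * x\<^sup>2 \<le> q * (quad_root a q)\<^sup>2"
    using assms by (simp add: mult_left_mono power_mono)
  moreover have "a * x \<le> a * quad_root a q" using assms by simp
  ultimately show ?thesis using quad_root_eq[OF assms(1,2)] by linarith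
qed

lemma c_coef_formula_eq:
  fixes b a D e :: real
  assumes "b > 0" "a > 0" "D * e \<ge> 0"
  shows "2 * b * a\<^sup>2 / (b * a\<^sup>2 + sqrt (b\<^sup>2 * a ^ 4 + 4 * b\<^sup>2 * a\<^sup>2 * D * e))
       = a * quad_root a (D * e)"
proof -
  have "b\<^sup>2 * a ^ 4 + 4 * b\<^sup>2 * a\<^sup>2 * D * e = (b * a)\<^sup>2 * (a\<^sup>2 + 4 * (D * e))"
    by (simp add: algebra_simps power2_eq_square power4_eq_xxxx)
  then have "sqrt (b\<^sup>2 * a ^ 4 + 4 * b\<^sup>2 * a\<^sup>2 * D * e) = b * a * sqrt (a\<^sup>2 + 4 * (D * e))"
    using assms by (simp add: real_sqrt_mult)
  then have "b * a\<^sup>2 + sqrt (b\<^sup>2 * a ^ 4 + 4 * b\<^sup>2 * a\<^sup>2 * D * e)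
           = (b * a) * (a + sqrt (a\<^sup>2 + 4 * (D * e)))"
    by (simp add: algebra_simps power2_eq_square)
  moreover have "2 * b * a\<^sup>2 = (b * a) * (a * 2)" by (simp add: power2_eq_square)
  ultimately show ?thesis
    using assms by (simp add: quad_root_def)
qed

lemma member_le_Bsum:
  assumes "\<forall>i\<in>{1..M}. b i > 0" "l \<in> {1..M}"
  shows "b l \<le> Bsum M b"
  unfolding Bsum_def using assms by (intro member_le_sum) (auto simp: less_imp_le)

lemma c_coef_eq_quad_root:
  assumes "\<forall>i\<in>{1..M}. b i > 0" "\<epsilon> \<ge> 0" "Bsum M b < 1" "l \<in> {1..M}"
  shows "c_coef M b \<epsilon> l = (1 - Bsum M b) * quad_root (1 - Bsum M b) ((Bsum M b - b l) * \<epsilon>)"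
  unfolding c_coef_def Let_def
  using assms member_le_Bsum[OF assms(1,4)] by (intro c_coef_formula_eq) auto

lemma x_star_pos_le_quad_root:
  assumes "M \<ge> 1" "\<forall>i\<in>{1..M}. b i > 0" "\<epsilon> \<ge> 0" "Bsum M b < 1" "l \<in> {1..M}"
  shows "0 < x_star M b \<epsilon>" "x_star M b \<epsilon> \<le> quad_root (1 - Bsum M b) ((Bsum M b - b l) * \<epsilon>)"
proof -
  let ?a = "1 - Bsum M b" and ?C = "c_coef M b \<epsilon> ` {1..M}"
  have c_pos: "c_coef M b \<epsilon> i > 0" if "i \<in> {1..M}" for i
    using c_coef_eq_quad_root[OF assms(2-4) that] member_le_Bsum[OF assms(2) that] assms(3,4)
    by (simp add: quad_root_pos)
  have "?C \<noteq> {}" using assms(1) by auto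
  then have "Min ?C \<in> ?C" by (intro Min_in) auto
  then show "0 < x_star M b \<epsilon>"
    unfolding x_star_def using c_pos assms(4) by auto
  have "Min ?C \<le> c_coef M b \<epsilon> l" using assms(5) by simp
  then have "x_star M b \<epsilon> \<le> c_coef M b \<epsilon> l / ?a"
    unfolding x_star_def using assms(4) by (simp add: divide_right_mono)
  then show "x_star M b \<epsilon> \<le> quad_root ?a ((Bsum M b - b l) * \<epsilon>)"
    using c_coef_eq_quad_root[OF assms(2-5)] assms(4) by simp
qed

lemma r_star_proportional:
  assumes "\<forall>i\<in>{1..M}. w i > 0" "\<forall>i\<in>{1..M}. b i > 0" "Bsum M b < 1" "l \<in> {1..M}"
  shows "r_star M w b \<epsilon> l = b l * x_star M b \<epsilon>"
proof -
  have "1 / sqrt (w l) \<le> beta_star M w"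
    unfolding beta_star_def using assms(1,4) by (intro member_le_sum) (auto simp: less_imp_le)
  then have "1 \<le> beta_star M w * sqrt (w l)"
    using assms(1,4) by (simp add: field_simps)
  moreover have "b l \<le> 1" using member_le_Bsum[OF assms(2,4)] assms(3) by simp
  ultimately show ?thesis unfolding r_star_def by simp
qed

lemma sigma_numerator_le:
  fixes r S t :: real
  assumes "r \<le> S"
  shows "(1 - exp (- t)) * S + r * exp (- t) \<le> r + (S - r) * t"
proof -
  have "(1 - exp (- t)) * S + r * exp (- t) = S - (S - r) * exp (- t)" by algebra
  also have "\<dots> \<le> S - (S - r) * (1 - t)"
    using assms exp_ge_add_one_self[of "- t"] by (simp add: mult_left_mono)
  also have "\<dots> = r + (S - r) * t" by algebra
  finally show ?thesis .
qed

lemma sigma_proportional_le: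
  assumes r: "\<forall>i\<in>{1..M}. r i = b i * x"
    and "l \<in> {1..M}" "0 \<le> b l" "b l \<le> Bsum M b" "0 < x" "0 \<le> \<epsilon>"
    and quad: "(Bsum M b - b l) * \<epsilon> * x\<^sup>2 + (1 - Bsum M b) * x \<le> 1"
  shows "sigma M \<epsilon> r l \<le> b l"
proof -
  let ?B = "Bsum M b"
  have S: "S_sum M r = ?B * x"
    unfolding S_sum_def Bsum_def using r by (simp add: sum_distrib_right)
  have rl: "r l = b l * x" using r assms(2) by simp
  have "b l * x \<le> ?B * x" using assms(4,5) by simp
  then have "(1 - exp (- r l * \<epsilon>)) * S_sum M r + r l * exp (- r l * \<epsilon>)
             \<le> b l * x + (?B * x - b l * x) * (b l * x * \<epsilon>)"
    using sigma_numerator_le[of "b l * x" "?B * x" "b l * x * \<epsilon>"] unfolding S rl by simp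
  also have "\<dots> = b l * (x + (?B - b l) * \<epsilon> * x\<^sup>2)"
    by (simp add: algebra_simps power2_eq_square)
  also have "\<dots> \<le> b l * (?B * x + 1)"
    using quad assms(3) by (intro mult_left_mono) (auto simp: algebra_simps)
  finally have num: "(1 - exp (- r l * \<epsilon>)) * S_sum M r + r l * exp (- r l * \<epsilon>)
                     \<le> b l * (S_sum M r + 1)" unfolding S .
  have "S_sum M r + 1 > 0" using assms(3-5) S by (simp add: add_nonneg_pos)
  with num show ?thesis unfolding sigma_def by (simp add: divide_le_eq)
qed

theorem lemma4:
  fixes M :: nat and w b :: "nat \<Rightarrow> real" and \<epsilon> :: real
  assumes "M \<ge> 1"
    and "\<forall>i\<in>{1..M}. w i > 0"
    and "\<forall>i\<in>{1..M}. b i > 0"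
    and "\<epsilon> > 0"
    and "(\<Sum>i=1..M. b i) < 1"
  shows "\<forall>l\<in>{1..M}. r_star M w b \<epsilon> l > 0 \<and> sigma M \<epsilon> (r_star M w b \<epsilon>) l \<le> b l"
proof
  fix l assume l: "l \<in> {1..M}"
  let ?B = "Bsum M b" and ?x = "x_star M b \<epsilon>"
  have B: "?B < 1" using assms(5) by (simp add: Bsum_def)
  have bl: "0 < b l" "b l \<le> ?B" using assms(3) l member_le_Bsum[OF assms(3) l] by auto
  have x: "0 < ?x" "?x \<le> quad_root (1 - ?B) ((?B - b l) * \<epsilon>)"
    using x_star_pos_le_quad_root[OF assms(1,3) _ B l] assms(4) by auto
  have r: "\<forall>i\<in>{1..M}. r_star M w b \<epsilon> i = b i * ?x"
    using r_star_proportional[OF assms(2,3) B] by blast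
  have "(?B - b l) * \<epsilon> * ?x\<^sup>2 + (1 - ?B) * ?x \<le> 1"
    using quadratic_le_one_below_root[OF _ _ _ x(2)] x(1) B bl assms(4) by simp
  then have "sigma M \<epsilon> (r_star M w b \<epsilon>) l \<le> b l"
    using sigma_proportional_le[OF r l _ bl(2) x(1)] bl(1) assms(4) by simp
  moreover have "r_star M w b \<epsilon> l > 0" using r l bl(1) x(1) by simp
  ultimately show "r_star M w b \<epsilon> l > 0 \<and> sigma M \<epsilon> (r_star M w b \<epsilon>) l \<le> b l" by simp
qed

end
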